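(* Let $m\ge2$ and let $\mathbf v=(v_1,\dots,v_m)$ and $\mathbf k=(k_1,\dots,k_m)$ be $m$-tuples of positive integers with $k_i\le v_i$ for all $i$ and $k_1\ge2$, $k_2\ge2$. Let $\mathcal D$ be a ${\rm GC}(\mathbf v,\mathbf k,2)$ on pairwise disjoint point sets $X_1,\dots,X_m$, and put $\mathbf v^+=(v_1+v_2,v_3,\dots,v_m)$ and $\mathbf k^+=(k_1+k_2,k_3,\dots,k_m)$. For each block $\mathbf B=(B_1,\dots,B_m)\in\mathcal D$ let $\mathbf B^+=(B_1\cup B_2,B_3,\dots,B_m)$, and let $\mathcal D^+=\{\mathbf B^+:\mathbf B\in\mathcal D\}$ (as a family indexed by $\mathcal D$). Then $\mathcal D^+$ is a ${\rm GC}(\mathbf v^+,\mathbf k^+,2)$ on the point sets $(X_1\cup X_2,X_3,\dots,X_m)$, and consequently $C(\mathbf v^+,\mathbf k^+,2)\le C(\mathbf v,\mathbf k,2)$.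
   Context: For tuples $\mathbf a,\mathbf b$ of positive integers of the same length $p$ with $\mathbf b\le\mathbf a$ entrywise, and pairwise disjoint sets $Y_1,\dots,Y_p$ with $|Y_i|=a_i$: a block is a $p$-tuple $(B_1,\dots,B_p)$ with $B_i\subseteq Y_i$, $|B_i|=b_i$; a $p$-tuple of sets $(T_1,\dots,T_p)$ is $(\mathbf a,\mathbf b,2)$-admissible if $T_i\subseteq Y_i$, $|T_i|\le b_i$ and $\sum|T_i|=2$, and is contained in a block if $T_i\subseteq B_i$ for all $i$. A ${\rm GC}(\mathbf a,\mathbf b,2)$ is a finite family (repetitions allowed) of blocks containing every admissible tuple in at least one block; $C(\mathbf a,\mathbf b,2)$ is the minimum number of blocks. *)

theory Defs
  imports Main
begin

text \<open>Tuples are lists (index 0 is the paper's index 1). A p-tuple of point sets Y,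
  size vector a and block-size vector b.\<close>

definition pw_disjoint :: "'a set list \<Rightarrow> bool" where
  "pw_disjoint Y \<longleftrightarrow> (\<forall>i<length Y. \<forall>j<length Y. i \<noteq> j \<longrightarrow> Y ! i \<inter> Y ! j = {})"

definition is_block :: "nat list \<Rightarrow> nat list \<Rightarrow> 'a set list \<Rightarrow> 'a set list \<Rightarrow> bool" where
  "is_block a b Y B \<longleftrightarrow> length B = length a \<and>
     (\<forall>i<length a. B ! i \<subseteq> Y ! i \<and> card (B ! i) = b ! i)"

definition admissible2 :: "nat list \<Rightarrow> nat list \<Rightarrow> 'a set list \<Rightarrow> 'a set list \<Rightarrow> bool" where
  "admissible2 a b Y T \<longleftrightarrow> length T = length a \<and>
     (\<forall>i<length a. T ! i \<subseteq> Y ! i \<and> card (T ! i) \<le> b ! i) \<and>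
     (\<Sum>i<length a. card (T ! i)) = 2"

definition contained_in :: "'a set list \<Rightarrow> 'a set list \<Rightarrow> bool" where
  "contained_in T B \<longleftrightarrow> (\<forall>i<length T. T ! i \<subseteq> B ! i)"

text \<open>A GC(a,b,2) on the point sets Y: a finite family (list, repetitions allowed) of blocks
  such that every admissible tuple is contained in at least one block.\<close>
definition is_GC2 :: "nat list \<Rightarrow> nat list \<Rightarrow> 'a set list \<Rightarrow> 'a set list list \<Rightarrow> bool" where
  "is_GC2 a b Y D \<longleftrightarrow> (\<forall>B\<in>set D. is_block a b Y B) \<and>
     (\<forall>T. admissible2 a b Y T \<longrightarrow> (\<exists>B\<in>set D. contained_in T B))"

text \<open>C(a,b,2): minimum number of blocks of a GC(a,b,2); the point sets are taken
  (without loss of generality) to be sets of natural numbers.\<close>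
definition C2 :: "nat list \<Rightarrow> nat list \<Rightarrow> nat" where
  "C2 a b = (LEAST n. \<exists>(Y :: nat set list) D. length Y = length a \<and>
      (\<forall>i<length a. finite (Y ! i) \<and> card (Y ! i) = a ! i) \<and> pw_disjoint Y \<and>
      is_GC2 a b Y D \<and> length D = n)"

end

theory Submission
  imports Defs "HOL-Library.Nat_Bijection"
begin

text \<open>An admissible pair \<open>T\<close> for the merged parameters splits, by intersecting its first
  component with \<open>X\<^sub>1\<close> and \<open>X\<^sub>2\<close>, into a tuple that is admissible for the original parameters,
  because it still has only two points and \<open>k\<^sub>1, k\<^sub>2 \<ge> 2\<close>. Some block \<open>B\<close> of \<open>\<D>\<close> contains the
  split tuple, and then \<open>B\<^sup>+\<close> contains \<open>T\<close>. The bound on \<open>C\<close> follows by merging a design of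
  minimum size, which exists since the family of all blocks is a design.\<close>

definition merge_first_parts :: "'a set list \<Rightarrow> 'a set list" where
  "merge_first_parts B = (B ! 0 \<union> B ! 1) # drop 2 B"

lemma merge_first_parts_Cons_Cons [simp]:
  "merge_first_parts (B\<^sub>0 # B\<^sub>1 # B) = (B\<^sub>0 \<union> B\<^sub>1) # B"
  by (simp add: merge_first_parts_def)

definition admissible :: "nat \<Rightarrow> nat list \<Rightarrow> nat list \<Rightarrow> 'a set list \<Rightarrow> 'a set list \<Rightarrow> bool" where
  "admissible t a b Y T \<longleftrightarrow> length T = length a \<and>
     (\<forall>i<length a. T ! i \<subseteq> Y ! i \<and> card (T ! i) \<le> b ! i) \<and>
     (\<Sum>i<length a. card (T ! i)) = t"

definition is_GC :: "nat \<Rightarrow> nat list \<Rightarrow> nat list \<Rightarrow> 'a set list \<Rightarrow> 'a set list list \<Rightarrow> bool" where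
  "is_GC t a b Y D \<longleftrightarrow> (\<forall>B\<in>set D. is_block a b Y B) \<and>
     (\<forall>T. admissible t a b Y T \<longrightarrow> (\<exists>B\<in>set D. contained_in T B))"

lemma is_GC2_eq_is_GC: "is_GC2 = is_GC 2"
  by (intro ext) (simp add: is_GC2_def is_GC_def admissible2_def admissible_def)

definition has_part_sizes :: "nat list \<Rightarrow> 'a set list \<Rightarrow> bool" where
  "has_part_sizes a Y \<longleftrightarrow> length Y = length a \<and> (\<forall>i<length a. finite (Y ! i) \<and> card (Y ! i) = a ! i)"

definition GC2_sizes :: "nat list \<Rightarrow> nat list \<Rightarrow> nat set" where
  "GC2_sizes a b = {length D | (Y :: nat set list) D.
     has_part_sizes a Y \<and> pw_disjoint Y \<and> is_GC2 a b Y D}"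

lemma C2_eq_Least: "C2 a b = (LEAST n. n \<in> GC2_sizes a b)"
  unfolding C2_def GC2_sizes_def has_part_sizes_def by (intro arg_cong[where f = Least] ext) auto

lemma C2_le: "n \<in> GC2_sizes a b \<Longrightarrow> C2 a b \<le> n"
  unfolding C2_eq_Least by (rule Least_le)

lemma is_block_Cons:
  "is_block (a\<^sub>0 # a) (b\<^sub>0 # b) (Y\<^sub>0 # Y) (B\<^sub>0 # B) \<longleftrightarrow>
     B\<^sub>0 \<subseteq> Y\<^sub>0 \<and> card B\<^sub>0 = b\<^sub>0 \<and> is_block a b Y B"
  by (auto simp: is_block_def All_less_Suc2)

lemma admissible_Cons:
  "admissible t (a\<^sub>0 # a) (b\<^sub>0 # b) (Y\<^sub>0 # Y) (T\<^sub>0 # T) \<longleftrightarrow>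
     T\<^sub>0 \<subseteq> Y\<^sub>0 \<and> card T\<^sub>0 \<le> b\<^sub>0 \<and> card T\<^sub>0 \<le> t \<and> admissible (t - card T\<^sub>0) a b Y T"
proof -
  have "(\<Sum>i<length (a\<^sub>0 # a). card ((T\<^sub>0 # T) ! i)) = card T\<^sub>0 + (\<Sum>i<length a. card (T ! i))"
    by (simp del: sum.lessThan_Suc add: sum.lessThan_Suc_shift)
  then show ?thesis
    by (auto simp: admissible_def All_less_Suc2)
qed

lemma contained_in_Cons:
  "contained_in (T\<^sub>0 # T) (B\<^sub>0 # B) \<longleftrightarrow> T\<^sub>0 \<subseteq> B\<^sub>0 \<and> contained_in T B"
  by (auto simp: contained_in_def All_less_Suc2)

lemma has_part_sizes_Cons:
  "has_part_sizes (a\<^sub>0 # a) (Y\<^sub>0 # Y) \<longleftrightarrow> finite Y\<^sub>0 \<and> card Y\<^sub>0 = a\<^sub>0 \<and> has_part_sizes a Y"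
  by (auto simp: has_part_sizes_def All_less_Suc2)

lemma pw_disjoint_Cons:
  "pw_disjoint (Y\<^sub>0 # Y) \<longleftrightarrow> (\<forall>i<length Y. Y\<^sub>0 \<inter> Y ! i = {}) \<and> pw_disjoint Y"
  unfolding pw_disjoint_def by (auto simp: All_less_Suc2 Int_commute; blast)

lemma length_Suc_Suc_conv:
  assumes "length xs = Suc (Suc n)"
  obtains x\<^sub>0 x\<^sub>1 ys where "xs = x\<^sub>0 # x\<^sub>1 # ys" and "length ys = n"
  using assms by (metis length_Suc_conv)

lemma is_block_merge_first_parts:
  assumes "is_block (a\<^sub>0 # a\<^sub>1 # a) (b\<^sub>0 # b\<^sub>1 # b) (Y\<^sub>0 # Y\<^sub>1 # Y) B"
    and "finite Y\<^sub>0" "finite Y\<^sub>1" "Y\<^sub>0 \<inter> Y\<^sub>1 = {}"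
  shows "is_block ((a\<^sub>0 + a\<^sub>1) # a) ((b\<^sub>0 + b\<^sub>1) # b) ((Y\<^sub>0 \<union> Y\<^sub>1) # Y) (merge_first_parts B)"
proof -
  have "length B = Suc (Suc (length a))"
    using assms(1) by (simp add: is_block_def)
  then obtain B\<^sub>0 B\<^sub>1 B' where B: "B = B\<^sub>0 # B\<^sub>1 # B'"
    by (rule length_Suc_Suc_conv)
  have B\<^sub>0: "B\<^sub>0 \<subseteq> Y\<^sub>0" "card B\<^sub>0 = b\<^sub>0" and B\<^sub>1: "B\<^sub>1 \<subseteq> Y\<^sub>1" "card B\<^sub>1 = b\<^sub>1"
    and "is_block a b Y B'"
    using assms(1) by (simp_all add: B is_block_Cons)
  moreover have "card (B\<^sub>0 \<union> B\<^sub>1) = b\<^sub>0 + b\<^sub>1"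
    using B\<^sub>0 B\<^sub>1 assms(2-4) finite_subset by (subst card_Un_disjoint) blast+
  ultimately show ?thesis
    by (auto simp: B is_block_Cons)
qed

text \<open>The trace of \<open>T\<^sub>0\<close> on each of \<open>Y\<^sub>0\<close>, \<open>Y\<^sub>1\<close> has at most \<open>t\<close> points, which is why
  \<open>t \<le> b\<^sub>0, b\<^sub>1\<close> is needed.\<close>
lemma admissible_split_first_part:
  assumes "admissible t ((a\<^sub>0 + a\<^sub>1) # a) ((b\<^sub>0 + b\<^sub>1) # b) ((Y\<^sub>0 \<union> Y\<^sub>1) # Y) (T\<^sub>0 # T)"
    and "t \<le> b\<^sub>0" "t \<le> b\<^sub>1" "finite Y\<^sub>0" "finite Y\<^sub>1" "Y\<^sub>0 \<inter> Y\<^sub>1 = {}"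
  shows "admissible t (a\<^sub>0 # a\<^sub>1 # a) (b\<^sub>0 # b\<^sub>1 # b) (Y\<^sub>0 # Y\<^sub>1 # Y) ((T\<^sub>0 \<inter> Y\<^sub>0) # (T\<^sub>0 \<inter> Y\<^sub>1) # T)"
proof -
  have T\<^sub>0: "T\<^sub>0 \<subseteq> Y\<^sub>0 \<union> Y\<^sub>1" "card T\<^sub>0 \<le> t" and T: "admissible (t - card T\<^sub>0) a b Y T"
    using assms(1) by (simp_all add: admissible_Cons)
  have "T\<^sub>0 = (T\<^sub>0 \<inter> Y\<^sub>0) \<union> (T\<^sub>0 \<inter> Y\<^sub>1)"
    using T\<^sub>0(1) by blast
  then have "card T\<^sub>0 = card (T\<^sub>0 \<inter> Y\<^sub>0) + card (T\<^sub>0 \<inter> Y\<^sub>1)"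
    using assms(4-6) by (metis card_Un_disjoint disjoint_iff finite_Int inf_commute IntD2)
  then show ?thesis
    using T T\<^sub>0(2) assms(2,3) by (simp add: admissible_Cons diff_diff_left)
qed

lemma is_GC_merge_first_parts:
  assumes "is_GC t (a\<^sub>0 # a\<^sub>1 # a) (b\<^sub>0 # b\<^sub>1 # b) (Y\<^sub>0 # Y\<^sub>1 # Y) D"
    and "t \<le> b\<^sub>0" "t \<le> b\<^sub>1" "finite Y\<^sub>0" "finite Y\<^sub>1" "Y\<^sub>0 \<inter> Y\<^sub>1 = {}"
  shows "is_GC t ((a\<^sub>0 + a\<^sub>1) # a) ((b\<^sub>0 + b\<^sub>1) # b) ((Y\<^sub>0 \<union> Y\<^sub>1) # Y) (map merge_first_parts D)"
  unfolding is_GC_def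
proof (intro conjI allI impI)
  show "\<forall>B\<in>set (map merge_first_parts D).
      is_block ((a\<^sub>0 + a\<^sub>1) # a) ((b\<^sub>0 + b\<^sub>1) # b) ((Y\<^sub>0 \<union> Y\<^sub>1) # Y) B"
    using assms(1,4-6) by (auto simp: is_GC_def intro: is_block_merge_first_parts)
next
  fix T
  assume adm: "admissible t ((a\<^sub>0 + a\<^sub>1) # a) ((b\<^sub>0 + b\<^sub>1) # b) ((Y\<^sub>0 \<union> Y\<^sub>1) # Y) T"
  then obtain T\<^sub>0 T' where T: "T = T\<^sub>0 # T'"
    by (cases T) (simp_all add: admissible_def)
  have "T\<^sub>0 \<subseteq> Y\<^sub>0 \<union> Y\<^sub>1"
    using adm by (simp add: T admissible_Cons)
  moreover obtain B where "B \<in> set D" and B: "contained_in ((T\<^sub>0 \<inter> Y\<^sub>0) # (T\<^sub>0 \<inter> Y\<^sub>1) # T') B"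
    using admissible_split_first_part[OF adm[unfolded T] assms(2-6)] assms(1)
    by (auto simp: is_GC_def)
  moreover have "length B = Suc (Suc (length a))"
    using \<open>B \<in> set D\<close> assms(1) by (simp add: is_GC_def is_block_def)
  then obtain B\<^sub>0 B\<^sub>1 B' where "B = B\<^sub>0 # B\<^sub>1 # B'"
    by (rule length_Suc_Suc_conv)
  ultimately have "contained_in T (merge_first_parts B)"
    by (auto simp: T contained_in_Cons)
  then show "\<exists>B\<in>set (map merge_first_parts D). contained_in T B"
    using \<open>B \<in> set D\<close> by auto
qed

lemma has_part_sizes_merge_first_parts:
  assumes "has_part_sizes (a\<^sub>0 # a\<^sub>1 # a) (Y\<^sub>0 # Y\<^sub>1 # Y)" "Y\<^sub>0 \<inter> Y\<^sub>1 = {}"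
  shows "has_part_sizes ((a\<^sub>0 + a\<^sub>1) # a) ((Y\<^sub>0 \<union> Y\<^sub>1) # Y)"
  using assms by (simp add: has_part_sizes_Cons card_Un_disjoint)

lemma pw_disjoint_merge_first_parts:
  assumes "pw_disjoint (Y\<^sub>0 # Y\<^sub>1 # Y)"
  shows "pw_disjoint ((Y\<^sub>0 \<union> Y\<^sub>1) # Y)"
  using assms by (auto simp: pw_disjoint_Cons All_less_Suc2)

lemma exists_block_containing:
  assumes "admissible t a b Y T" "length Y = length a"
    and "\<forall>i<length a. finite (Y ! i) \<and> b ! i \<le> card (Y ! i)"
  shows "\<exists>B. is_block a b Y B \<and> contained_in T B"
proof -
  have "\<forall>i<length a. \<exists>S. T ! i \<subseteq> S \<and> S \<subseteq> Y ! i \<and> card S = b ! i"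
    using assms by (auto simp: admissible_def intro: exists_subset_between)
  then obtain f where f: "\<forall>i<length a. T ! i \<subseteq> f i \<and> f i \<subseteq> Y ! i \<and> card (f i) = b ! i"
    by metis
  have "is_block a b Y (map f [0..<length a])" "contained_in T (map f [0..<length a])"
    using f assms(1) by (simp_all add: is_block_def contained_in_def admissible_def)
  then show ?thesis
    by blast
qed

lemma finite_blocks:
  assumes "\<forall>i<length Y. finite (Y ! i)" "length Y = length a"
  shows "finite {B. is_block a b Y B}"
proof (rule finite_subset)
  show "{B. is_block a b Y B} \<subseteq> {B. set B \<subseteq> Pow (\<Union>(set Y)) \<and> length B = length a}"
    using assms(2) by (fastforce simp: is_block_def in_set_conv_nth)
  show "finite {B. set B \<subseteq> Pow (\<Union>(set Y)) \<and> length B = length a}"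
    using assms(1) by (intro finite_lists_length_eq) (metis finite_Pow_iff finite_Union in_set_conv_nth finite_set)
qed

lemma exists_is_GC:
  assumes "has_part_sizes a Y" "\<forall>i<length a. b ! i \<le> a ! i"
  shows "\<exists>D. is_GC t a b Y D"
proof -
  have Y: "length Y = length a" "\<forall>i<length a. finite (Y ! i) \<and> b ! i \<le> card (Y ! i)"
    using assms by (auto simp: has_part_sizes_def)
  obtain D where "set D = {B. is_block a b Y B}"
    using finite_blocks[of Y a b] Y finite_list by force
  then have "is_GC t a b Y D"
    using exists_block_containing[OF _ Y] by (auto simp: is_GC_def)
  then show ?thesis ..
qed

lemma exists_disjoint_parts:
  "\<exists>Y :: nat set list. has_part_sizes a Y \<and> pw_disjoint Y"
proof -
  define Y where "Y = map (\<lambda>i. prod_encode ` ({i} \<times> {..<a ! i})) [0..<length a]"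
  have "has_part_sizes a Y"
    by (simp add: Y_def has_part_sizes_def card_image inj_prod_encode card_cartesian_product)
  moreover have "pw_disjoint Y"
    by (auto simp: Y_def pw_disjoint_def)
  ultimately show ?thesis
    by blast
qed

lemma C2_attained:
  assumes "\<forall>i<length a. b ! i \<le> a ! i"
  shows "C2 a b \<in> GC2_sizes a b"
proof -
  obtain Y :: "nat set list" where "has_part_sizes a Y" "pw_disjoint Y"
    using exists_disjoint_parts by blast
  moreover obtain D where "is_GC2 a b Y D"
    using exists_is_GC[OF \<open>has_part_sizes a Y\<close> assms] by (auto simp: is_GC2_eq_is_GC)
  ultimately have "length D \<in> GC2_sizes a b"
    by (auto simp: GC2_sizes_def)
  then show ?thesis
    unfolding C2_eq_Least by (rule LeastI)
qed

lemma C2_merge_first_parts_le: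
  assumes "2 \<le> b\<^sub>0" "2 \<le> b\<^sub>1" "\<forall>i<length (a\<^sub>0 # a\<^sub>1 # a). (b\<^sub>0 # b\<^sub>1 # b) ! i \<le> (a\<^sub>0 # a\<^sub>1 # a) ! i"
  shows "C2 ((a\<^sub>0 + a\<^sub>1) # a) ((b\<^sub>0 + b\<^sub>1) # b) \<le> C2 (a\<^sub>0 # a\<^sub>1 # a) (b\<^sub>0 # b\<^sub>1 # b)"
proof -
  obtain Y :: "nat set list" and E where Y: "has_part_sizes (a\<^sub>0 # a\<^sub>1 # a) Y" "pw_disjoint Y"
    and E: "is_GC2 (a\<^sub>0 # a\<^sub>1 # a) (b\<^sub>0 # b\<^sub>1 # b) Y E" "length E = C2 (a\<^sub>0 # a\<^sub>1 # a) (b\<^sub>0 # b\<^sub>1 # b)"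
    using C2_attained[OF assms(3)] by (auto simp: GC2_sizes_def)
  have "length Y = Suc (Suc (length a))"
    using Y(1) by (simp add: has_part_sizes_def)
  then obtain Y\<^sub>0 Y\<^sub>1 Y' where Y': "Y = Y\<^sub>0 # Y\<^sub>1 # Y'"
    by (rule length_Suc_Suc_conv)
  have "Y\<^sub>0 \<inter> Y\<^sub>1 = {}" "finite Y\<^sub>0" "finite Y\<^sub>1"
    using Y by (auto simp: Y' pw_disjoint_Cons has_part_sizes_Cons All_less_Suc2)
  then have "has_part_sizes ((a\<^sub>0 + a\<^sub>1) # a) ((Y\<^sub>0 \<union> Y\<^sub>1) # Y')"
    and "pw_disjoint ((Y\<^sub>0 \<union> Y\<^sub>1) # Y')"
    and "is_GC2 ((a\<^sub>0 + a\<^sub>1) # a) ((b\<^sub>0 + b\<^sub>1) # b) ((Y\<^sub>0 \<union> Y\<^sub>1) # Y') (map merge_first_parts E)"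
    using Y E(1) assms(1,2) unfolding Y' is_GC2_eq_is_GC
    by (auto intro: has_part_sizes_merge_first_parts pw_disjoint_merge_first_parts
        is_GC_merge_first_parts)
  then have "length E \<in> GC2_sizes ((a\<^sub>0 + a\<^sub>1) # a) ((b\<^sub>0 + b\<^sub>1) # b)"
    unfolding GC2_sizes_def by (metis (mono_tags, lifting) length_map mem_Collect_eq)
  then show ?thesis
    using C2_le E(2) by metis
qed

theorem proposition3p22:
  fixes m :: nat and v k :: "nat list" and X :: "'a set list" and D :: "'a set list list"
  assumes "m \<ge> 2"
    and "length v = m" and "length k = m" and "length X = m"
    and "\<forall>i<m. 0 < k ! i \<and> k ! i \<le> v ! i"
    and "k ! 0 \<ge> 2" and "k ! 1 \<ge> 2"
    and "\<forall>i<m. finite (X ! i) \<and> card (X ! i) = v ! i"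
    and "pw_disjoint X"
    and "is_GC2 v k X D"
  shows "is_GC2 ((v ! 0 + v ! 1) # drop 2 v) ((k ! 0 + k ! 1) # drop 2 k)
           ((X ! 0 \<union> X ! 1) # drop 2 X) (map (\<lambda>B. (B ! 0 \<union> B ! 1) # drop 2 B) D)
       \<and> C2 ((v ! 0 + v ! 1) # drop 2 v) ((k ! 0 + k ! 1) # drop 2 k) \<le> C2 v k"
proof -
  obtain n where m: "m = Suc (Suc n)"
    using assms(1) by (metis add_2_eq_Suc le_Suc_ex)
  obtain v\<^sub>0 v\<^sub>1 v' k\<^sub>0 k\<^sub>1 k' X\<^sub>0 X\<^sub>1 X'
    where lists: "v = v\<^sub>0 # v\<^sub>1 # v'" "k = k\<^sub>0 # k\<^sub>1 # k'" "X = X\<^sub>0 # X\<^sub>1 # X'"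
    using assms(2-4) unfolding m by (metis length_Suc_Suc_conv)
  have "X\<^sub>0 \<inter> X\<^sub>1 = {}" "finite X\<^sub>0" "finite X\<^sub>1"
    using assms(8,9) unfolding lists m by (auto simp: pw_disjoint_Cons All_less_Suc2)
  then have "is_GC2 ((v\<^sub>0 + v\<^sub>1) # v') ((k\<^sub>0 + k\<^sub>1) # k') ((X\<^sub>0 \<union> X\<^sub>1) # X') (map merge_first_parts D)"
    using is_GC_merge_first_parts assms(6,7,10) unfolding lists is_GC2_eq_is_GC by simp
  moreover have "C2 ((v\<^sub>0 + v\<^sub>1) # v') ((k\<^sub>0 + k\<^sub>1) # k') \<le> C2 v k"
    using C2_merge_first_parts_le assms(2,5,6,7) unfolding lists by simp
  ultimately show ?thesis
    by (simp add: lists merge_first_parts_def[abs_def])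
qed

end
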